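(* Let $\Lambda=(\mathcal{L}\subset\mathbb{R}^s,\mathbb{R}^n)$ be a generic cut-and-project scheme with associated matrix $L$ and with self-similarity $A\in\mathbb{R}^{n\times n}$, and let $B\in\mathbb{R}^{(s-n)\times(s-n)}$ and $C\in\mathbb{Z}^{s\times s}$ satisfy $\begin{pmatrix}A&O\\O&B\end{pmatrix}L=LC$. Then for every polynomial $p\in\mathbb{Z}[X]$, $p(A)=O$ if and only if $p(B)=O$.
   Context: A lattice $\mathcal{L}\subset\mathbb{R}^s$ is $\{L\mathbf{r}:\mathbf{r}\in\mathbb{Z}^s\}$ for a non-singular $L\in\mathbb{R}^{s\times s}$. For $1\le n<s$ the scheme $(\mathcal{L}\subset\mathbb{R}^s,\mathbb{R}^n)$ has projections $\pi_\parallel(\mathbf{x})=(x_1,\dots,x_n)^\top$, $\pi_\perp(\mathbf{x})=(x_{n+1},\dots,x_s)^\top$; it is generic if $\pi_\parallel|_{\mathcal{L}}$, $\pi_\perp|_{\mathcal{L}}$ are injective and $\pi_\perp(\mathcal{L})$ is dense in $\mathbb{R}^{s-n}$. $A$ is a self-similarity of a generic scheme if $A\pi_\parallel(\mathcal{L})\subset\pi_\parallel(\mathcal{L})$ and there exist $C\in\mathbb{Z}^{s\times s}$, $B$ real with $\begin{pmatrix}A&O\\O&B\end{pmatrix}L=LC$. *)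

theory Defs
  imports "Jordan_Normal_Form.Matrix" "HOL-Computational_Algebra.Polynomial"
begin

definition lattice :: "nat \<Rightarrow> real mat \<Rightarrow> real vec set" where
  "lattice s L = {L *\<^sub>v vec s (\<lambda>i. real_of_int (z i)) | z. True}"

definition proj_par :: "nat \<Rightarrow> real vec \<Rightarrow> real vec" where
  "proj_par n x = vec n (\<lambda>i. x $ i)"

definition proj_perp :: "nat \<Rightarrow> nat \<Rightarrow> real vec \<Rightarrow> real vec" where
  "proj_perp s n x = vec (s - n) (\<lambda>i. x $ (n + i))"

definition vdist :: "nat \<Rightarrow> real vec \<Rightarrow> real vec \<Rightarrow> real" where
  "vdist m x y = sqrt (\<Sum>i<m. (x $ i - y $ i)\<^sup>2)"

definition dense_in :: "nat \<Rightarrow> real vec set \<Rightarrow> bool" where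
  "dense_in m S \<longleftrightarrow> (\<forall>y \<in> carrier_vec m. \<forall>e>0. \<exists>x\<in>S. vdist m x y < e)"

definition cp_scheme :: "nat \<Rightarrow> nat \<Rightarrow> real mat \<Rightarrow> bool" where
  "cp_scheme s n L \<longleftrightarrow> 1 \<le> n \<and> n < s \<and> L \<in> carrier_mat s s \<and> invertible_mat L"

definition generic_scheme :: "nat \<Rightarrow> nat \<Rightarrow> real mat \<Rightarrow> bool" where
  "generic_scheme s n L \<longleftrightarrow> cp_scheme s n L
     \<and> inj_on (proj_par n) (lattice s L)
     \<and> inj_on (proj_perp s n) (lattice s L)
     \<and> dense_in (s - n) (proj_perp s n ` lattice s L)"

definition self_sim_rel :: "nat \<Rightarrow> nat \<Rightarrow> real mat \<Rightarrow> real mat \<Rightarrow> real mat \<Rightarrow> int mat \<Rightarrow> bool" where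
  "self_sim_rel s n L A B C \<longleftrightarrow> B \<in> carrier_mat (s - n) (s - n) \<and> C \<in> carrier_mat s s \<and>
     four_block_mat A (0\<^sub>m n (s - n)) (0\<^sub>m (s - n) n) B * L = L * map_mat real_of_int C"

definition self_similarity :: "nat \<Rightarrow> nat \<Rightarrow> real mat \<Rightarrow> real mat \<Rightarrow> bool" where
  "self_similarity s n L A \<longleftrightarrow> generic_scheme s n L \<and> A \<in> carrier_mat n n
     \<and> (\<lambda>x. A *\<^sub>v x) ` proj_par n ` lattice s L \<subseteq> proj_par n ` lattice s L
     \<and> (\<exists>B C. self_sim_rel s n L A B C)"

definition mat_poly_eval :: "int poly \<Rightarrow> real mat \<Rightarrow> real mat" where
  "mat_poly_eval p M = foldr (\<lambda>i X. X + real_of_int (coeff p i) \<cdot>\<^sub>m (M ^\<^sub>m i))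
      [0..<Suc (degree p)] (0\<^sub>m (dim_row M) (dim_col M))"

end

theory Submission imports Defs begin

(* p(diag(A,B)) = diag(p(A),p(B)) is intertwined by L with the integer matrix p(C), hence maps
   the lattice into itself. If p(A) = 0, the parallel projection of the image of every lattice
   point is 0, so injectivity of the parallel projection on the lattice makes p(diag(A,B))
   vanish on the lattice; as L is invertible, p(diag(A,B)) = 0 and thus p(B) = 0. The converse
   uses the perpendicular projection. *)

definition mat_power_sum :: "(nat \<Rightarrow> 'a) \<Rightarrow> nat list \<Rightarrow> 'a :: comm_semiring_1 mat \<Rightarrow> 'a mat" where
  "mat_power_sum c ks M = foldr (\<lambda>i X. X + c i \<cdot>\<^sub>m (M ^\<^sub>m i)) ks (0\<^sub>m (dim_row M) (dim_col M))"

lemma mat_poly_eval_eq_mat_power_sum: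
  "mat_poly_eval p M = mat_power_sum (\<lambda>i. real_of_int (coeff p i)) [0..<Suc (degree p)] M"
  unfolding mat_poly_eval_def mat_power_sum_def ..

lemma mat_power_sum_Cons:
  "mat_power_sum c (i # ks) M = mat_power_sum c ks M + c i \<cdot>\<^sub>m (M ^\<^sub>m i)"
  by (simp add: mat_power_sum_def)

lemma mat_power_sum_carrier:
  "M \<in> carrier_mat k k \<Longrightarrow> mat_power_sum c ks M \<in> carrier_mat k k"
  by (induction ks) (auto simp: mat_power_sum_def)

lemma mat_power_sum_four_block_diag:
  assumes A: "A \<in> carrier_mat n n" and B: "B \<in> carrier_mat m m"
  shows "mat_power_sum c ks (four_block_mat A (0\<^sub>m n m) (0\<^sub>m m n) B) =
    four_block_mat (mat_power_sum c ks A) (0\<^sub>m n m) (0\<^sub>m m n) (mat_power_sum c ks B)"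
proof (induction ks)
  case Nil
  show ?case using A B unfolding mat_power_sum_def by (intro eq_matI) auto
next
  case (Cons i ks)
  have "mat_power_sum c (i # ks) (four_block_mat A (0\<^sub>m n m) (0\<^sub>m m n) B) =
      four_block_mat (mat_power_sum c ks A) (0\<^sub>m n m) (0\<^sub>m m n) (mat_power_sum c ks B) +
      four_block_mat (c i \<cdot>\<^sub>m A ^\<^sub>m i) (0\<^sub>m n m) (0\<^sub>m m n) (c i \<cdot>\<^sub>m B ^\<^sub>m i)"
    unfolding mat_power_sum_Cons Cons pow_four_block_mat[OF A B]
    by (subst smult_four_block_mat) (use A B in auto)
  also have "\<dots> = four_block_mat (mat_power_sum c (i # ks) A) (0\<^sub>m n m) (0\<^sub>m m n)
      (mat_power_sum c (i # ks) B)"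
    by (subst add_four_block_mat[OF mat_power_sum_carrier[OF A] _ _ mat_power_sum_carrier[OF B]])
      (use A B in \<open>auto simp: mat_power_sum_Cons\<close>)
  finally show ?case .
qed

lemma pow_mat_intertwine:
  assumes D: "D \<in> carrier_mat s s" and L: "L \<in> carrier_mat s s" and C: "C \<in> carrier_mat s s"
    and DL: "D * L = L * C"
  shows "D ^\<^sub>m k * L = L * C ^\<^sub>m k"
proof (induction k)
  case 0
  then show ?case using D L C by simp
next
  case (Suc k)
  have "D ^\<^sub>m Suc k * L = D ^\<^sub>m k * (D * L)"
    using D L by (simp add: assoc_mult_mat[of _ s s _ s _ s])
  also have "\<dots> = (D ^\<^sub>m k * L) * C"
    using D L C by (simp add: DL assoc_mult_mat[of _ s s _ s _ s])
  also have "\<dots> = L * C ^\<^sub>m Suc k"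
    using D L C by (simp add: Suc assoc_mult_mat[of _ s s _ s _ s])
  finally show ?case .
qed

lemma mat_power_sum_intertwine:
  assumes D: "D \<in> carrier_mat s s" and L: "L \<in> carrier_mat s s" and C: "C \<in> carrier_mat s s"
    and DL: "D * L = L * C"
  shows "mat_power_sum c ks D * L = L * mat_power_sum c ks C"
proof (induction ks)
  case Nil
  then show ?case using D L C by (simp add: mat_power_sum_def)
next
  case (Cons i ks)
  have "mat_power_sum c (i # ks) D * L = mat_power_sum c ks D * L + c i \<cdot>\<^sub>m (D ^\<^sub>m i * L)"
    using mat_power_sum_carrier[OF D] D L
    by (simp add: mat_power_sum_Cons add_mult_distrib_mat[of _ s s _ _ s]
        mult_smult_assoc_mat[of _ s s _ s])
  also have "\<dots> = L * mat_power_sum c ks C + c i \<cdot>\<^sub>m (L * C ^\<^sub>m i)"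
    using pow_mat_intertwine[OF D L C DL] Cons by simp
  also have "\<dots> = L * mat_power_sum c (i # ks) C"
    using mat_power_sum_carrier[OF C] C L
    by (simp add: mat_power_sum_Cons mult_add_distrib_mat[of _ s s _ s]
        mult_smult_distrib[of _ s s _ s])
  finally show ?case .
qed

lemma of_int_mat_power_sum:
  assumes C: "C \<in> carrier_mat k k"
  shows "map_mat of_int (mat_power_sum c ks C) =
    mat_power_sum (\<lambda>i. of_int (c i)) ks (map_mat (of_int :: int \<Rightarrow> 'a :: comm_ring_1) C)"
proof (induction ks)
  case Nil
  then show ?case by (auto simp: mat_power_sum_def)
next
  case (Cons i ks)
  have "map_mat of_int (mat_power_sum c (i # ks) C) =
      map_mat of_int (mat_power_sum c ks C) + of_int (c i) \<cdot>\<^sub>m (map_mat of_int (C ^\<^sub>m i) :: 'a mat)"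
    using carrier_matD[OF mat_power_sum_carrier[OF C, of c ks]] carrier_matD[OF C]
    by (intro eq_matI) (auto simp: mat_power_sum_Cons split: if_split_asm)
  also have "\<dots> = mat_power_sum (\<lambda>i. of_int (c i)) (i # ks) (map_mat of_int C)"
    unfolding Cons.IH of_int_hom.mat_hom_pow[OF C] mat_power_sum_Cons ..
  finally show ?case .
qed

lemma mult_of_int_vec_mem_lattice:
  assumes "z \<in> carrier_vec s"
  shows "L *\<^sub>v map_vec real_of_int z \<in> lattice s L"
proof -
  have "map_vec real_of_int z = vec s (\<lambda>i. real_of_int (z $ i))"
    using assms by (intro eq_vecI) auto
  then show ?thesis
    unfolding lattice_def by (intro CollectI exI[of _ "\<lambda>i. z $ i"]) simp
qed

lemma lattice_carrier_vec:
  assumes "L \<in> carrier_mat s s" and "x \<in> lattice s L"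
  shows "x \<in> carrier_vec s"
  using assms unfolding lattice_def by auto

lemma zero_mem_lattice:
  assumes "L \<in> carrier_mat s s"
  shows "0\<^sub>v s \<in> lattice s L"
proof -
  have "L *\<^sub>v map_vec real_of_int (0\<^sub>v s) = 0\<^sub>v s"
    using assms by (intro eq_vecI) (auto simp: of_int_hom.vec_hom_zero)
  then show ?thesis
    using mult_of_int_vec_mem_lattice[of "0\<^sub>v s" s L] by simp
qed

lemma col_mem_lattice:
  assumes L: "L \<in> carrier_mat s s" and j: "j < s"
  shows "col L j \<in> lattice s L"
proof -
  have "map_vec real_of_int (unit_vec s j) = unit_vec s j"
    by (intro eq_vecI) (auto simp: unit_vec_def)
  moreover have "col L j = L *\<^sub>v unit_vec s j"
    using L j by (intro eq_vecI) auto
  ultimately have "col L j = L *\<^sub>v map_vec real_of_int (unit_vec s j)"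
    by simp
  then show ?thesis
    using mult_of_int_vec_mem_lattice[of "unit_vec s j" s L] by simp
qed

lemma mult_mat_vec_mem_lattice:
  assumes L: "L \<in> carrier_mat s s" and P: "P \<in> carrier_mat s s" and Q: "Q \<in> carrier_mat s s"
    and PL: "P * L = L * map_mat real_of_int Q"
    and x: "x \<in> lattice s L"
  shows "P *\<^sub>v x \<in> lattice s L"
proof -
  obtain z where "x = L *\<^sub>v vec s (\<lambda>i. real_of_int (z i))"
    using x unfolding lattice_def by blast
  then have x: "x = L *\<^sub>v map_vec real_of_int (vec s z)"
    by (simp add: map_vec comp_def)
  have "P *\<^sub>v x = (L * map_mat real_of_int Q) *\<^sub>v map_vec real_of_int (vec s z)"
    using L P by (simp add: x PL[symmetric])
  also have "\<dots> = L *\<^sub>v map_vec real_of_int (Q *\<^sub>v vec s z)"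
    using L Q by (simp add: of_int_hom.mult_mat_vec_hom[OF Q])
  finally show ?thesis
    using mult_of_int_vec_mem_lattice[of "Q *\<^sub>v vec s z" s L] Q by simp
qed

lemma invertible_mat_mult_right_eq_zero:
  assumes L: "L \<in> carrier_mat s s" and inv: "invertible_mat L" and P: "P \<in> carrier_mat k s"
    and PL: "P * L = 0\<^sub>m k s"
  shows "P = 0\<^sub>m k s"
proof -
  obtain L' where LL': "L * L' = 1\<^sub>m s" and L'L: "L' * L = 1\<^sub>m (dim_row L')"
    using inv L unfolding invertible_mat_def inverts_mat_def by auto
  have L': "L' \<in> carrier_mat s s"
    using LL' L'L L by (metis carrier_matD carrier_matI index_mult_mat(2,3) index_one_mat(2,3))
  have "P = P * (L * L')"
    using P by (simp add: LL')
  also have "\<dots> = (P * L) * L'"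
    using P L L' by simp
  finally show ?thesis
    using L' by (simp add: PL)
qed

lemma mat_eq_zero_if_vanishes_on_lattice:
  assumes L: "L \<in> carrier_mat s s" and inv: "invertible_mat L" and P: "P \<in> carrier_mat k s"
    and vanish: "\<And>x. x \<in> lattice s L \<Longrightarrow> P *\<^sub>v x = 0\<^sub>v k"
  shows "P = 0\<^sub>m k s"
proof (rule invertible_mat_mult_right_eq_zero[OF L inv P])
  show "P * L = 0\<^sub>m k s"
    using P L vanish[OF col_mem_lattice[OF L]] by (intro mat_col_eqI) auto
qed

lemma lattice_endomorphism_eq_zero:
  assumes L: "L \<in> carrier_mat s s" and inv: "invertible_mat L" and P: "P \<in> carrier_mat s s"
    and preserves: "\<And>x. x \<in> lattice s L \<Longrightarrow> P *\<^sub>v x \<in> lattice s L"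
    and inj: "inj_on f (lattice s L)"
    and vanish: "\<And>x. x \<in> lattice s L \<Longrightarrow> f (P *\<^sub>v x) = f (0\<^sub>v s)"
  shows "P = 0\<^sub>m s s"
  by (rule mat_eq_zero_if_vanishes_on_lattice[OF L inv P])
    (rule inj_onD[OF inj vanish preserves zero_mem_lattice[OF L]])

lemma append_proj_par_proj_perp:
  assumes "n \<le> s" and "x \<in> carrier_vec s"
  shows "proj_par n x @\<^sub>v proj_perp s n x = x"
  using assms by (intro eq_vecI) (auto simp: proj_par_def proj_perp_def)

lemma four_block_diag_mult_vec_proj:
  assumes A: "A \<in> carrier_mat n n" and B: "B \<in> carrier_mat (s - n) (s - n)"
    and ns: "n \<le> s" and x: "x \<in> carrier_vec s"
  defines "M \<equiv> four_block_mat A (0\<^sub>m n (s - n)) (0\<^sub>m (s - n) n) B"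
  shows "proj_par n (M *\<^sub>v x) = A *\<^sub>v proj_par n x"
    and "proj_perp s n (M *\<^sub>v x) = B *\<^sub>v proj_perp s n x"
proof -
  have "M *\<^sub>v x = A *\<^sub>v proj_par n x @\<^sub>v B *\<^sub>v proj_perp s n x"
    unfolding M_def
    by (subst (1) append_proj_par_proj_perp[OF ns x, symmetric], rule mult_mat_vec_split[OF A B])
      (auto simp: proj_par_def proj_perp_def)
  then show "proj_par n (M *\<^sub>v x) = A *\<^sub>v proj_par n x"
    and "proj_perp s n (M *\<^sub>v x) = B *\<^sub>v proj_perp s n x"
    using A B ns by (auto intro!: eq_vecI simp: proj_par_def proj_perp_def)
qed

lemma four_block_diag_eq_zero_iff:
  assumes A: "A \<in> carrier_mat n n" and B: "B \<in> carrier_mat (s - n) (s - n)" and ns: "n \<le> s"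
  shows "four_block_mat A (0\<^sub>m n (s - n)) (0\<^sub>m (s - n) n) B = 0\<^sub>m s s \<longleftrightarrow>
    A = 0\<^sub>m n n \<and> B = 0\<^sub>m (s - n) (s - n)"
  using A B ns
  by (auto simp: mat_eq_iff)
    (metis add_diff_cancel_left' add_less_cancel_left le_add_diff_inverse not_add_less1)

lemma generic_scheme_block_diag_endomorphism_zero_iff:
  assumes gen: "generic_scheme s n L"
    and PA: "PA \<in> carrier_mat n n" and PB: "PB \<in> carrier_mat (s - n) (s - n)"
    and preserves: "\<And>x. x \<in> lattice s L \<Longrightarrow>
      four_block_mat PA (0\<^sub>m n (s - n)) (0\<^sub>m (s - n) n) PB *\<^sub>v x \<in> lattice s L"
  shows "PA = 0\<^sub>m n n \<longleftrightarrow> PB = 0\<^sub>m (s - n) (s - n)"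
proof -
  define P where "P = four_block_mat PA (0\<^sub>m n (s - n)) (0\<^sub>m (s - n) n) PB"
  have ns: "n \<le> s" and L: "L \<in> carrier_mat s s" and inv: "invertible_mat L"
    and inj_par: "inj_on (proj_par n) (lattice s L)"
    and inj_perp: "inj_on (proj_perp s n) (lattice s L)"
    using gen unfolding generic_scheme_def cp_scheme_def by auto
  have P: "P \<in> carrier_mat s s"
    using PA PB ns unfolding P_def by auto
  note proj_P = four_block_diag_mult_vec_proj[OF PA PB ns lattice_carrier_vec[OF L], folded P_def]
  have "PA = 0\<^sub>m n n \<Longrightarrow> P = 0\<^sub>m s s"
    using proj_P(1) ns
    by (intro lattice_endomorphism_eq_zero[OF L inv P preserves[folded P_def] inj_par])
      (auto simp: proj_par_def)
  moreover have "PB = 0\<^sub>m (s - n) (s - n) \<Longrightarrow> P = 0\<^sub>m s s"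
    using proj_P(2) ns
    by (intro lattice_endomorphism_eq_zero[OF L inv P preserves[folded P_def] inj_perp])
      (auto simp: proj_perp_def)
  ultimately show ?thesis
    using four_block_diag_eq_zero_iff[OF PA PB ns, folded P_def] by blast
qed

theorem lemma1:
  fixes s n :: nat and L A B :: "real mat" and C :: "int mat" and p :: "int poly"
  assumes "generic_scheme s n L"
    and "self_similarity s n L A"
    and "self_sim_rel s n L A B C"
  shows "mat_poly_eval p A = 0\<^sub>m n n \<longleftrightarrow> mat_poly_eval p B = 0\<^sub>m (s - n) (s - n)"
proof -
  have ns: "n \<le> s" and L: "L \<in> carrier_mat s s"
    using assms(1) unfolding generic_scheme_def cp_scheme_def by auto
  have A: "A \<in> carrier_mat n n" and B: "B \<in> carrier_mat (s - n) (s - n)"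
    and C: "C \<in> carrier_mat s s"
    and DL: "four_block_mat A (0\<^sub>m n (s - n)) (0\<^sub>m (s - n) n) B * L = L * map_mat of_int C"
    using assms(2,3) unfolding self_similarity_def self_sim_rel_def by auto
  let ?ks = "[0..<Suc (degree p)]"
  let ?pD = "four_block_mat (mat_poly_eval p A) (0\<^sub>m n (s - n)) (0\<^sub>m (s - n) n) (mat_poly_eval p B)"
  have pA: "mat_poly_eval p A \<in> carrier_mat n n"
    and pB: "mat_poly_eval p B \<in> carrier_mat (s - n) (s - n)"
    unfolding mat_poly_eval_eq_mat_power_sum using mat_power_sum_carrier A B by blast+
  have pD: "?pD \<in> carrier_mat s s"
    using pA pB ns by auto
  have intertwine: "?pD * L = L * map_mat of_int (mat_power_sum (coeff p) ?ks C)"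
    unfolding mat_poly_eval_eq_mat_power_sum mat_power_sum_four_block_diag[OF A B, symmetric]
      of_int_mat_power_sum[OF C]
    by (rule mat_power_sum_intertwine[OF _ L _ DL]) (use A B C ns in auto)
  show ?thesis
    using mult_mat_vec_mem_lattice[OF L pD mat_power_sum_carrier[OF C] intertwine]
    by (rule generic_scheme_block_diag_endomorphism_zero_iff[OF assms(1) pA pB])
qed

end
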